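(* The ideal $I^{(k,r)}$ coincides with each of $J_1=\{f\in V: u_\lambda(f)=0$ for all $\lambda\in P$ with $\sharp^{(k,r)}(\lambda)\ge1\}$, $J_2=\{f\in V: u_\lambda(f)=0$ for all $\lambda\in S^{(k,r)}\}$, $J_3=\{f\in V: u_\lambda(f)=0$ for all $\lambda\in S'^{(k,r)}\}$, where $u_\lambda$ is evaluated at the specialization $(\ast)$.
   Context: Fix integers $n\ge2$, $1\le k\le n-1$, $r\ge2$, $g=\gcd(k+1,r-1)$, $\tau=e^{2\pi\sqrt{-1}/(r-1)}$, and specialize $(\ast)$: $t=u^{(r-1)/g}$, $q=\tau u^{-(k+1)/g}$; $\mathbb K$ is the resulting field of rational functions in (a root of) $u$ and $V=\mathbb K[x_1^{\pm1},\dots,x_n^{\pm1}]$. $Z^{(k,r)}$ is the set of $z\in\mathbb K^n$ for which there exist distinct $i_1,\dots,i_{k+1}\in\{1,\dots,n\}$ and $s_1,\dots,s_k\in\mathbb Z_{\ge0}$ with $z_{i_{a+1}}=z_{i_a}tq^{s_a}$ ($1\le a\le k$), $\sum_as_a\le r-2$, and $i_a<i_{a+1}$ whenever $s_a=0$; $I^{(k,r)}=\{f\in V:f(z)=0\ \forall z\in Z^{(k,r)}\}$. Let $P=\mathbb Z^n$. For $\lambda\in P$, $\rho(\lambda)$ is the unique permutation of $(\frac{n-1}2,\frac{n-3}2,\dots,-\frac{n-1}2)$ with $\rho(\lambda)_i>\rho(\lambda)_j$ iff $\lambda_i>\lambda_j$ or ($\lambda_i=\lambda_j$, $i<j$). For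 $f\in V$, $u_\lambda(f)=f(t^{-\rho(\lambda)_1}q^{-\lambda_1},\dots,t^{-\rho(\lambda)_n}q^{-\lambda_n})$. A wheel in $\lambda$ is a tuple $(i_1,\dots,i_{k+1})$ of distinct indices such that $(u_\lambda(x_1),\dots,u_\lambda(x_n))$ satisfies the defining conditions of $Z^{(k,r)}$ with these indices, i.e. $u_\lambda(x_{i_{a+1}})=u_\lambda(x_{i_a})tq^{s_a}$ for some $s_a\in\mathbb Z_{\ge0}$ with $\sum s_a\le r-2$ and $i_a<i_{a+1}$ if $s_a=0$. Two wheels that are cyclic rotations of each other are identified; $\sharp^{(k,r)}(\lambda)$ is the number of equivalence classes of wheels in $\lambda$. For $\lambda\in P$ let $(i_1,\dots,i_n)$ be the indices with $\rho(\lambda)_{i_a}=\frac{n+1}2-a$. For $a\ge2,b\ge1$, $(i,j)$ is a neighborhood of type $(a,b)$ in $\lambda$ if $\rho(\lambda)_i-\rho(\lambda)_j=a-1$ and either $\lambda_i-\lambda_j\le b-1$, or $\lambda_i-\lambda_j=b$ and $j<i$. $S^{(k,r)}$: the $\lambda$ having a neighborhood of type $(k+1,r-1)$; $S'^{(k,r)}$: the $\lambda$ having a neighborhood $(i,j)$ of type $(k+1,r-1)$ with $\lambda_i-\lambda_j\le r-2$. *)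

theory Defs
  imports Complex_Main "HOL-Computational_Algebra.Polynomial" "HOL-Computational_Algebra.Fraction_Field"
begin

text \<open>The field K: rational functions over the complex numbers in an indeterminate w,
  where w is a square root of u (u = w^2).  Since (r-1)/g and (k+1)/g are integers,
  t and q are Laurent monomials in u, and t^(1/2) = w^((r-1)/g).\<close>

type_synonym K = "complex poly fract"

definition wroot :: K where "wroot = Fract [:0, 1:] 1"

definition uvar :: K where "uvar = wroot ^ 2"

definition gpar :: "nat \<Rightarrow> nat \<Rightarrow> nat" where
  "gpar k r = gcd (k + 1) (r - 1)"

definition tau :: "nat \<Rightarrow> K" where
  "tau r = Fract [: cis (2 * pi / real (r - 1)) :] 1"

definition tpar :: "nat \<Rightarrow> nat \<Rightarrow> K" where
  "tpar k r = uvar powi int ((r - 1) div gpar k r)"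

definition qpar :: "nat \<Rightarrow> nat \<Rightarrow> K" where
  "qpar k r = tau r * uvar powi (- int ((k + 1) div gpar k r))"

text \<open>The square root of t used to form t^(-rho) when rho is a half-integer.\<close>
definition thalf :: "nat \<Rightarrow> nat \<Rightarrow> K" where
  "thalf k r = wroot powi int ((r - 1) div gpar k r)"

definition laurent :: "nat \<Rightarrow> (int list \<Rightarrow> K) set" where
  "laurent n = {f. finite {m. f m \<noteq> 0} \<and> (\<forall>m. f m \<noteq> 0 \<longrightarrow> length m = n)}"

definition leval :: "nat \<Rightarrow> (int list \<Rightarrow> K) \<Rightarrow> (nat \<Rightarrow> K) \<Rightarrow> K" where
  "leval n f z = (\<Sum>m\<in>{m. f m \<noteq> 0}. f m * (\<Prod>i<n. z i powi (m ! i)))"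

definition wheel_cond :: "nat \<Rightarrow> nat \<Rightarrow> nat \<Rightarrow> (nat \<Rightarrow> K) \<Rightarrow> (nat \<Rightarrow> nat) \<Rightarrow> (nat \<Rightarrow> nat) \<Rightarrow> bool" where
  "wheel_cond n k r z i s \<longleftrightarrow>
     inj_on i {..k} \<and> (\<forall>a\<le>k. i a < n) \<and>
     (\<forall>a<k. z (i (Suc a)) = z (i a) * tpar k r * qpar k r ^ s a) \<and>
     (\<Sum>a<k. s a) \<le> r - 2 \<and>
     (\<forall>a<k. s a = 0 \<longrightarrow> i a < i (Suc a))"

definition Zset :: "nat \<Rightarrow> nat \<Rightarrow> nat \<Rightarrow> (nat \<Rightarrow> K) set" where
  "Zset n k r = {z. (\<forall>j<n. z j \<noteq> 0) \<and> (\<forall>j\<ge>n. z j = 0) \<and> (\<exists>i s. wheel_cond n k r z i s)}"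

definition Iideal :: "nat \<Rightarrow> nat \<Rightarrow> nat \<Rightarrow> (int list \<Rightarrow> K) set" where
  "Iideal n k r = {f \<in> laurent n. \<forall>z\<in>Zset n k r. leval n f z = 0}"

text \<open>P = Z^n, as functions vanishing outside {0..n-1}.\<close>
definition Pset :: "nat \<Rightarrow> (nat \<Rightarrow> int) set" where
  "Pset n = {lam. \<forall>i\<ge>n. lam i = 0}"

text \<open>rho(lam)_i = (n+1)/2 - rank_i with rank_i = 1 + #{j. lam_j > lam_i or (lam_j = lam_i and j < i)};
  rho2 = 2 * rho (an integer).\<close>
definition rank_cnt :: "nat \<Rightarrow> (nat \<Rightarrow> int) \<Rightarrow> nat \<Rightarrow> nat" where
  "rank_cnt n lam i = card {j. j < n \<and> (lam j > lam i \<or> (lam j = lam i \<and> j < i))}"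

definition rho2 :: "nat \<Rightarrow> (nat \<Rightarrow> int) \<Rightarrow> nat \<Rightarrow> int" where
  "rho2 n lam i = int n - 1 - 2 * int (rank_cnt n lam i)"

definition upoint :: "nat \<Rightarrow> nat \<Rightarrow> nat \<Rightarrow> (nat \<Rightarrow> int) \<Rightarrow> nat \<Rightarrow> K" where
  "upoint n k r lam i = (if i < n then thalf k r powi (- rho2 n lam i) * qpar k r powi (- lam i) else 0)"

definition ueval :: "nat \<Rightarrow> nat \<Rightarrow> nat \<Rightarrow> (nat \<Rightarrow> int) \<Rightarrow> (int list \<Rightarrow> K) \<Rightarrow> K" where
  "ueval n k r lam f = leval n f (upoint n k r lam)"

definition wheels :: "nat \<Rightarrow> nat \<Rightarrow> nat \<Rightarrow> (nat \<Rightarrow> int) \<Rightarrow> (nat \<Rightarrow> nat) set" where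
  "wheels n k r lam = {i. (\<forall>a>k. i a = 0) \<and> (\<exists>s. wheel_cond n k r (upoint n k r lam) i s)}"

definition rot_equiv :: "nat \<Rightarrow> (nat \<Rightarrow> nat) \<Rightarrow> (nat \<Rightarrow> nat) \<Rightarrow> bool" where
  "rot_equiv k i j \<longleftrightarrow> (\<exists>c\<le>k. \<forall>a\<le>k. j a = i ((a + c) mod (k + 1)))"

definition sharp :: "nat \<Rightarrow> nat \<Rightarrow> nat \<Rightarrow> (nat \<Rightarrow> int) \<Rightarrow> nat" where
  "sharp n k r lam = card ((\<lambda>i. {j\<in>wheels n k r lam. rot_equiv k i j}) ` wheels n k r lam)"

definition nbhd :: "nat \<Rightarrow> nat \<Rightarrow> nat \<Rightarrow> (nat \<Rightarrow> int) \<Rightarrow> nat \<Rightarrow> nat \<Rightarrow> bool" where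
  "nbhd n a b lam i j \<longleftrightarrow> i < n \<and> j < n \<and>
     rho2 n lam i - rho2 n lam j = 2 * (int a - 1) \<and>
     (lam i - lam j \<le> int b - 1 \<or> (lam i - lam j = int b \<and> j < i))"

definition Sset :: "nat \<Rightarrow> nat \<Rightarrow> nat \<Rightarrow> (nat \<Rightarrow> int) set" where
  "Sset n k r = {lam \<in> Pset n. \<exists>i j. nbhd n (k + 1) (r - 1) lam i j}"

definition S'set :: "nat \<Rightarrow> nat \<Rightarrow> nat \<Rightarrow> (nat \<Rightarrow> int) set" where
  "S'set n k r = {lam \<in> Pset n. \<exists>i j. nbhd n (k + 1) (r - 1) lam i j \<and> lam i - lam j \<le> int r - 2}"

definition J1 :: "nat \<Rightarrow> nat \<Rightarrow> nat \<Rightarrow> (int list \<Rightarrow> K) set" where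
  "J1 n k r = {f \<in> laurent n. \<forall>lam\<in>Pset n. sharp n k r lam \<ge> 1 \<longrightarrow> ueval n k r lam f = 0}"

definition J2 :: "nat \<Rightarrow> nat \<Rightarrow> nat \<Rightarrow> (int list \<Rightarrow> K) set" where
  "J2 n k r = {f \<in> laurent n. \<forall>lam\<in>Sset n k r. ueval n k r lam f = 0}"

definition J3 :: "nat \<Rightarrow> nat \<Rightarrow> nat \<Rightarrow> (int list \<Rightarrow> K) set" where
  "J3 n k r = {f \<in> laurent n. \<forall>lam\<in>S'set n k r. ueval n k r lam f = 0}"

end

theory Submission
  imports Defs "HOL-Computational_Algebra.Polynomial_Factorial"
begin

text \<open>
  If \<lambda> carries a wheel then u_\<lambda> lies in Z, and a neighbourhood (i, j) of type (k+1, r-1) yields a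
  wheel along the k+1 positions of consecutive \<rho>-rank from i to j: their coordinates differ by
  t q^s with total shift \<lambda>_i - \<lambda>_j; in the boundary case \<lambda>_i - \<lambda>_j = r - 1 the relation
  t^(k+1) q^(r-1) = 1 closes the chain into a cycle, and starting after a step with positive shift
  gives a wheel. Hence I \<subseteq> J1 \<subseteq> J2 \<subseteq> J3.

  For J3 \<subseteq> I fix z \<in> Z with its wheel i_0, ..., i_k. The points with the same wheel form a torus
  with free coordinates z_(i_0) and the z_j off the wheel, and f restricts to a Laurent polynomial on
  it. Ordering the free coordinates, every exponent vector \<mu> that strictly decreases along this order
  gives some \<lambda> \<in> S' whose u_\<lambda> is the torus point with coordinates C_v q^(-\<mu>_v). As q is not a root
  of unity, a Laurent polynomial vanishing at all these staircase points vanishes identically: let the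
  exponent of the first coordinate tend to infinity and compare geometric sequences.
\<close>

lemma to_fract_power: "to_fract (p ^ m) = to_fract p ^ m"
  by (induction m) simp_all

lemma wroot_eq: "wroot = to_fract [:0, 1:]"
  by (simp add: wroot_def to_fract_def)

lemma wroot_nonzero: "wroot \<noteq> 0"
  by (simp add: wroot_eq)

lemma wroot_power_eq_1_iff: "wroot ^ m = 1 \<longleftrightarrow> m = 0"
proof
  assume "wroot ^ m = 1"
  then have "[:0, 1:] ^ m = (1 :: complex poly)"
    by (metis to_fract_1 to_fract_eq_iff to_fract_power wroot_eq)
  then show "m = 0"
    using degree_linear_power[of "0 :: complex" m] by simp
qed simp

lemma wroot_powi_eq_1_iff: "wroot powi j = 1 \<longleftrightarrow> j = 0"
  using wroot_power_eq_1_iff[of "nat \<bar>j\<bar>"] wroot_nonzero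
  by (cases "j \<ge> 0") (auto simp: power_int_def field_simps)

lemma uvar_nonzero: "uvar \<noteq> 0"
  by (simp add: uvar_def wroot_nonzero)

lemma thalf_nonzero: "thalf k r \<noteq> 0"
  by (simp add: thalf_def wroot_nonzero)

lemma tau_power_eq_1: "r \<ge> 2 \<Longrightarrow> tau r ^ (r - 1) = 1"
proof -
  assume "r \<ge> 2"
  then have "cis (2 * pi / real (r - 1)) ^ (r - 1) = 1"
    by (simp add: DeMoivre)
  then show ?thesis
    by (metis tau_def to_fract_def to_fract_1 to_fract_power one_pCons poly_const_pow)
qed

lemma tau_nonzero: "tau r \<noteq> 0"
  by (simp add: tau_def eq_fract Zero_fract_def)

lemma qpar_nonzero: "qpar k r \<noteq> 0"
  by (simp add: qpar_def tau_nonzero uvar_nonzero)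

lemma tpar_eq_thalf_square: "tpar k r = thalf k r ^ 2"
  unfolding tpar_def thalf_def uvar_def power_int_of_nat
  by (simp only: power_mult[symmetric] mult.commute)

lemma qpar_power_eq:
  assumes "r \<ge> 2"
  shows "qpar k r ^ (r - 1) = uvar powi (- int ((k + 1) div gpar k r) * int (r - 1))"
  unfolding qpar_def power_mult_distrib tau_power_eq_1[OF assms] power_int_power' by simp

lemma qpar_powi_eq_1_iff:
  assumes "r \<ge> 2"
  shows "qpar k r powi m = 1 \<longleftrightarrow> m = 0"
proof
  let ?c = "int ((k + 1) div gpar k r)"
  assume "qpar k r powi m = 1"
  then have "(qpar k r powi m) powi int (r - 1) = 1"
    by simp
  then have "(qpar k r ^ (r - 1)) powi m = 1"
    by (simp only: power_int_power power_int_mult[symmetric] mult.commute)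
  then have "wroot powi (2 * (- ?c * int (r - 1)) * m) = 1"
    unfolding qpar_power_eq[OF assms] uvar_def power_int_power power_int_mult[symmetric] by simp
  moreover have "?c > 0"
    by (simp add: gpar_def dvd_imp_le div_greater_zero_iff)
  ultimately show "m = 0"
    using assms by (simp add: wroot_powi_eq_1_iff)
qed simp

lemma tpar_qpar_relation:
  assumes "r \<ge> 2"
  shows "tpar k r ^ (k + 1) * qpar k r ^ (r - 1) = 1"
proof -
  let ?g = "gpar k r"
  have "(r - 1) div ?g * (k + 1) = (k + 1) div ?g * (r - 1)"
    by (metis div_mult_swap gcd_dvd1 gcd_dvd2 gpar_def mult.commute)
  then have "int ((r - 1) div ?g) * int (k + 1) + - int ((k + 1) div ?g) * int (r - 1) = 0"
    by (metis add.right_inverse mult_minus_left of_nat_mult)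
  then show ?thesis
    unfolding qpar_power_eq[OF assms] tpar_def power_int_power'
    by (simp flip: power_int_add add: uvar_nonzero)
qed

definition laurent_sum :: "'m set \<Rightarrow> ('m \<Rightarrow> 'a) \<Rightarrow> ('m \<Rightarrow> 'v \<Rightarrow> int) \<Rightarrow> 'v set \<Rightarrow> ('v \<Rightarrow> 'a::field) \<Rightarrow> 'a" where
  "laurent_sum M c E V y = (\<Sum>x\<in>M. c x * (\<Prod>v\<in>V. y v powi E x v))"

lemma leval_eq_laurent_sum: "leval n f z = laurent_sum {m. f m \<noteq> 0} f (\<lambda>m j. m ! j) {..<n} z"
  by (simp add: leval_def laurent_sum_def)

lemma laurent_sum_cong: "(\<And>v. v \<in> V \<Longrightarrow> y v = y' v) \<Longrightarrow> laurent_sum M c E V y = laurent_sum M c E V y'"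
  unfolding laurent_sum_def by simp

lemma laurent_sum_regroup:
  assumes "finite M" "finite V" "v \<notin> V"
  shows "laurent_sum M c E (insert v V) y =
    (\<Sum>d\<in>(\<lambda>x. E x v) ` M. y v powi d * laurent_sum {x\<in>M. E x v = d} c E V y)"
proof -
  have "laurent_sum M c E (insert v V) y = (\<Sum>x\<in>M. y v powi E x v * (c x * (\<Prod>u\<in>V. y u powi E x u)))"
    unfolding laurent_sum_def using assms(2,3) by (simp add: algebra_simps)
  also have "\<dots> = (\<Sum>d\<in>(\<lambda>x. E x v) ` M. \<Sum>x\<in>{x\<in>M. E x v = d}. y v powi E x v * (c x * (\<Prod>u\<in>V. y u powi E x u)))"
    by (rule sum.image_gen[OF assms(1)])
  also have "\<dots> = (\<Sum>d\<in>(\<lambda>x. E x v) ` M. y v powi d * laurent_sum {x\<in>M. E x v = d} c E V y)"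
    unfolding laurent_sum_def by (intro sum.cong) (auto simp: sum_distrib_left)
  finally show ?thesis .
qed

lemma laurent_sum_collapse:
  assumes "finite V" "B \<subseteq> V" "v \<in> B" "y v \<noteq> 0"
  shows "laurent_sum M c E V (\<lambda>j. if j \<in> B then y v * \<kappa> j else y j) =
    laurent_sum M (\<lambda>x. c x * (\<Prod>j\<in>B. \<kappa> j powi E x j))
      (\<lambda>x u. if u = v then (\<Sum>j\<in>B. E x j) else E x u) (insert v (V - B)) y"
proof -
  have fin: "finite B" "finite (V - B)" and v: "v \<notin> V - B"
    using assms finite_subset by auto
  have "(\<Prod>j\<in>V. (if j \<in> B then y v * \<kappa> j else y j) powi E x j) =
      (\<Prod>u\<in>V - B. y u powi E x u) * ((\<Prod>j\<in>B. \<kappa> j powi E x j) * y v powi (\<Sum>j\<in>B. E x j))" for x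
  proof -
    have "(\<Prod>j\<in>V. (if j \<in> B then y v * \<kappa> j else y j) powi E x j) =
        (\<Prod>u\<in>V - B. y u powi E x u) * (\<Prod>j\<in>B. (y v * \<kappa> j) powi E x j)"
      unfolding prod.subset_diff[OF assms(2,1)] by (intro arg_cong2[where f = "(*)"] prod.cong[OF refl]) auto
    also have "(\<Prod>j\<in>B. (y v * \<kappa> j) powi E x j) = (\<Prod>j\<in>B. \<kappa> j powi E x j) * y v powi (\<Sum>j\<in>B. E x j)"
      using fin(1) assms(4)
      by (induction B rule: finite_induct) (simp_all add: power_int_mult_distrib power_int_add)
    finally show ?thesis .
  qed
  moreover have "(\<Prod>u\<in>V - B. y u powi (if u = v then e else E x u)) = (\<Prod>u\<in>V - B. y u powi E x u)"
    for x e using assms(3) by (intro prod.cong) auto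
  ultimately show ?thesis
    unfolding laurent_sum_def using fin v by (simp add: mult_ac)
qed

lemma geometric_sum_eventually_zero_coeff:
  fixes \<beta> :: "'d \<Rightarrow> 'a::field"
  assumes "finite D" "inj_on \<beta> D" "\<And>d. d \<in> D \<Longrightarrow> \<beta> d \<noteq> 0"
    and "\<And>N. N \<ge> L \<Longrightarrow> (\<Sum>d\<in>D. c d * \<beta> d ^ N) = 0" and "d \<in> D"
  shows "c d = 0"
  using assms
proof (induction D arbitrary: c d rule: finite_induct)
  case empty
  then show ?case by simp
next
  case (insert d0 D)
  \<comment> \<open>Subtracting \<beta> d0 times the N-th sum from the (N+1)-th one eliminates d0.\<close>
  have "(\<Sum>d\<in>D. (c d * (\<beta> d - \<beta> d0)) * \<beta> d ^ N) = 0" if "N \<ge> L" for N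
  proof -
    have "(\<Sum>d\<in>D. (c d * (\<beta> d - \<beta> d0)) * \<beta> d ^ N) =
        (\<Sum>d\<in>insert d0 D. c d * \<beta> d ^ Suc N) - \<beta> d0 * (\<Sum>d\<in>insert d0 D. c d * \<beta> d ^ N)"
      using insert.hyps by (simp add: sum_distrib_left algebra_simps flip: sum_subtractf)
    moreover have "(\<Sum>d\<in>insert d0 D. c d * \<beta> d ^ Suc N) = 0" "(\<Sum>d\<in>insert d0 D. c d * \<beta> d ^ N) = 0"
      using insert.prems(3)[of "Suc N"] insert.prems(3)[of N] that by simp_all
    ultimately show ?thesis
      by simp
  qed
  moreover have "\<beta> d \<noteq> \<beta> d0" if "d \<in> D" for d
    using insert.prems(1) insert.hyps(2) that by (auto simp: image_iff)
  ultimately have rest: "c d = 0" if "d \<in> D" for d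
    using insert.IH[of "\<lambda>d. c d * (\<beta> d - \<beta> d0)" d] insert.prems(1,2) that by auto
  then have "c d0 * \<beta> d0 ^ L = 0"
    using insert.prems(3)[of L] insert.hyps by simp
  then show ?case
    using rest insert.prems(2,4) by auto
qed

lemma laurent_sum_component_zero:
  assumes "finite M" "finite V" "v \<notin> V" "b \<noteq> 0" "Q \<noteq> 0" "\<And>m. m \<noteq> 0 \<Longrightarrow> Q powi m \<noteq> 1"
    and zero: "\<And>N. N \<ge> L \<Longrightarrow> laurent_sum M c E (insert v V) (y(v := b * Q ^ N)) = 0"
    and d: "d \<in> (\<lambda>x. E x v) ` M"
  shows "laurent_sum {x\<in>M. E x v = d} c E V y = 0"
proof -
  let ?D = "(\<lambda>x. E x v) ` M"
  let ?G = "\<lambda>d. laurent_sum {x\<in>M. E x v = d} c E V y"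
  have "(\<Sum>d\<in>?D. (b powi d * ?G d) * (Q powi d) ^ N) = 0" if "N \<ge> L" for N
  proof -
    have "?G d = laurent_sum {x\<in>M. E x v = d} c E V (y(v := b * Q ^ N))" for d
      using assms(3) by (intro laurent_sum_cong) auto
    moreover have "(b * Q ^ N) powi d = b powi d * (Q powi d) ^ N" for d
      by (simp add: power_int_mult_distrib power_int_power power_int_power' mult.commute)
    ultimately have "laurent_sum M c E (insert v V) (y(v := b * Q ^ N)) =
        (\<Sum>d\<in>?D. (b powi d * ?G d) * (Q powi d) ^ N)"
      using laurent_sum_regroup[OF assms(1-3), of c E "y(v := b * Q ^ N)"] by (simp add: mult_ac)
    then show ?thesis
      using zero[OF that] by simp
  qed
  moreover have "inj_on (\<lambda>d. Q powi d) ?D"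
  proof (rule inj_onI)
    fix d1 d2
    assume "Q powi d1 = Q powi d2"
    then have "Q powi (d1 - d2) = 1"
      using assms(5) by (simp add: power_int_diff)
    then have "d1 - d2 = 0"
      using assms(6) by blast
    then show "d1 = d2"
      by simp
  qed
  ultimately have "b powi d * ?G d = 0"
    using geometric_sum_eventually_zero_coeff[of ?D "\<lambda>d. Q powi d" L "\<lambda>d. b powi d * ?G d" d] d assms(1,5)
    by simp
  then show ?thesis
    using assms(4) by simp
qed

lemma laurent_sum_zero_if_zero_on_staircase:
  assumes "distinct vs" "finite M" "\<And>v. v \<in> set vs \<Longrightarrow> C v \<noteq> 0" "Q \<noteq> 0"
    and "\<And>m. m \<noteq> 0 \<Longrightarrow> Q powi m \<noteq> 1"
    and "\<And>\<mu>. sorted_wrt (\<lambda>u v. \<mu> v < \<mu> u) vs \<Longrightarrow>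
      laurent_sum M c E (set vs) (\<lambda>v. C v * Q ^ \<mu> v) = 0"
    and "\<And>v. v \<in> set vs \<Longrightarrow> y v \<noteq> 0"
  shows "laurent_sum M c E (set vs) y = 0"
  using assms
proof (induction vs arbitrary: M c y)
  case Nil
  then show ?case by (simp add: laurent_sum_def)
next
  case (Cons v vs)
  let ?D = "(\<lambda>x. E x v) ` M"
  have v: "v \<notin> set vs"
    using Cons.prems(1) by simp
  \<comment> \<open>Each v-component vanishes on the staircase of vs: let the exponent of v run off to infinity.\<close>
  have component_zero: "laurent_sum {x\<in>M. E x v = d} c E (set vs) y' = 0"
    if d: "d \<in> ?D" and y': "\<And>u. u \<in> set vs \<Longrightarrow> y' u \<noteq> 0" for d y'
  proof (rule Cons.IH)
    fix \<mu> :: "'a \<Rightarrow> nat"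
    assume \<mu>: "sorted_wrt (\<lambda>u v. \<mu> v < \<mu> u) vs"
    define L where "L = Suc (Max (insert 0 (\<mu> ` set vs)))"
    have "laurent_sum M c E (insert v (set vs)) ((\<lambda>u. C u * Q ^ \<mu> u)(v := C v * Q ^ N)) = 0"
      if "N \<ge> L" for N
    proof -
      have "\<mu> u < N" if "u \<in> set vs" for u
      proof -
        have "\<mu> u \<le> Max (insert 0 (\<mu> ` set vs))"
          using that by simp
        then show ?thesis
          using \<open>N \<ge> L\<close> by (simp add: L_def)
      qed
      then have "sorted_wrt (\<lambda>u w. (\<mu>(v := N)) w < (\<mu>(v := N)) u) (v # vs)"
        using \<mu> v by (auto intro: sorted_wrt_mono_rel[OF _ \<mu>])
      moreover have "(\<lambda>u. C u * Q ^ (\<mu>(v := N)) u) = (\<lambda>u. C u * Q ^ \<mu> u)(v := C v * Q ^ N)"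
        by auto
      ultimately show ?thesis
        using Cons.prems(6)[of "\<mu>(v := N)"] by simp
    qed
    then show "laurent_sum {x\<in>M. E x v = d} c E (set vs) (\<lambda>u. C u * Q ^ \<mu> u) = 0"
      using Cons.prems(2-5) v d by (intro laurent_sum_component_zero[where b = "C v" and Q = Q and L = L]) auto
  qed (use Cons.prems y' in auto)
  have "laurent_sum M c E (set (v # vs)) y = (\<Sum>d\<in>?D. y v powi d * laurent_sum {x\<in>M. E x v = d} c E (set vs) y)"
    using laurent_sum_regroup[OF Cons.prems(2) _ v] by simp
  also have "\<dots> = 0"
    using component_zero Cons.prems(7) by simp
  finally show ?case .
qed

definition precedes :: "(nat \<Rightarrow> int) \<Rightarrow> nat \<Rightarrow> nat \<Rightarrow> bool" where
  "precedes lam j x \<longleftrightarrow> lam j > lam x \<or> (lam j = lam x \<and> j < x)"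

lemma rank_cnt_eq_card_precedes: "rank_cnt n lam x = card {j. j < n \<and> precedes lam j x}"
  by (simp add: rank_cnt_def precedes_def)

lemma precedes_irrefl [simp]: "\<not> precedes lam x x"
  by (simp add: precedes_def)

lemma precedes_asym: "precedes lam x y \<Longrightarrow> \<not> precedes lam y x"
  by (auto simp: precedes_def)

lemma precedes_total: "x \<noteq> y \<Longrightarrow> precedes lam x y \<or> precedes lam y x"
  by (auto simp: precedes_def)

lemma transp_precedes: "transp (precedes lam)"
  by (auto simp: transp_def precedes_def)

lemma rank_cnt_less: "x < n \<Longrightarrow> rank_cnt n lam x < n"
proof -
  assume "x < n"
  then have "card {j. j < n \<and> precedes lam j x} \<le> card ({..<n} - {x})"
    by (intro card_mono) auto
  then show ?thesis
    using \<open>x < n\<close> by (simp add: rank_cnt_eq_card_precedes)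
qed

lemma rank_cnt_strict_mono:
  assumes "precedes lam x y" "x < n"
  shows "rank_cnt n lam x < rank_cnt n lam y"
proof -
  have "{j. j < n \<and> precedes lam j x} \<subseteq> {j. j < n \<and> precedes lam j y}"
    using assms(1) by (auto simp: precedes_def)
  moreover have "x \<in> {j. j < n \<and> precedes lam j y} - {j. j < n \<and> precedes lam j x}"
    using assms by simp
  ultimately have "{j. j < n \<and> precedes lam j x} \<subset> {j. j < n \<and> precedes lam j y}"
    by blast
  then show ?thesis
    unfolding rank_cnt_eq_card_precedes by (rule psubset_card_mono[rotated]) simp
qed

lemma bij_betw_rank_cnt: "bij_betw (rank_cnt n lam) {..<n} {..<n}"
proof -
  have "inj_on (rank_cnt n lam) {..<n}"
    by (rule inj_onI) (metis lessThan_iff nat_neq_iff precedes_total rank_cnt_strict_mono)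
  moreover have "rank_cnt n lam ` {..<n} \<subseteq> {..<n}"
    using rank_cnt_less by blast
  ultimately show ?thesis
    by (simp add: bij_betw_def endo_inj_surj)
qed

lemma precedes_if_rank_cnt_Suc:
  "x < n \<Longrightarrow> y < n \<Longrightarrow> rank_cnt n lam y = Suc (rank_cnt n lam x) \<Longrightarrow> precedes lam x y"
  using precedes_total[of x y lam] rank_cnt_strict_mono[of lam y x n] by fastforce

lemma rank_cnt_nth:
  assumes "distinct L" "set L = {..<n}" "sorted_wrt (precedes lam) L" "p < n"
  shows "rank_cnt n lam (L ! p) = p"
proof -
  have len: "length L = n"
    using distinct_card[OF assms(1)] assms(2) by simp
  have "{j. j < n \<and> precedes lam j (L ! p)} = set (take p L)"
  proof (intro set_eqI iffI)
    fix j
    assume j: "j \<in> {j. j < n \<and> precedes lam j (L ! p)}"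
    then obtain b where b: "b < n" "j = L ! b"
      using assms(2) len by (metis in_set_conv_nth lessThan_iff mem_Collect_eq)
    have "\<not> p < b" and "b \<noteq> p"
      using j b sorted_wrt_nth_less[OF assms(3), of p b] len by (auto dest: precedes_asym)
    then show "j \<in> set (take p L)"
      using b len by (auto simp: in_set_conv_nth)
  next
    fix j
    assume "j \<in> set (take p L)"
    then obtain b where "b < p" "j = L ! b"
      using assms(4) len by (auto simp: in_set_conv_nth)
    then show "j \<in> {j. j < n \<and> precedes lam j (L ! p)}"
      using sorted_wrt_nth_less[OF assms(3)] assms(2,4) len nth_mem[of b L] by auto
  qed
  then show ?thesis
    using assms(1,4) len by (simp add: rank_cnt_eq_card_precedes distinct_card)
qed

lemma upoint_nonzero: "x < n \<Longrightarrow> upoint n k r lam x \<noteq> 0"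
  by (simp add: upoint_def thalf_nonzero qpar_nonzero)

lemma upoint_ratio:
  assumes "x < n" "y < n"
  shows "upoint n k r lam y = upoint n k r lam x *
    tpar k r powi (int (rank_cnt n lam y) - int (rank_cnt n lam x)) * qpar k r powi (lam x - lam y)"
proof -
  have "tpar k r powi (int (rank_cnt n lam y) - int (rank_cnt n lam x)) =
      thalf k r powi (rho2 n lam x - rho2 n lam y)"
    by (simp add: tpar_eq_thalf_square power_int_power rho2_def)
  then show ?thesis
    using assms thalf_nonzero qpar_nonzero
    by (simp add: upoint_def mult_ac flip: power_int_add)
qed

lemma upoint_rank_Suc:
  assumes "x < n" "y < n" "rank_cnt n lam y = Suc (rank_cnt n lam x)" "lam y \<le> lam x"
  shows "upoint n k r lam y = upoint n k r lam x * tpar k r * qpar k r ^ nat (lam x - lam y)"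
  using upoint_ratio[OF assms(1,2), of k r] assms(3,4) by (simp add: power_int_def)

lemma tpar_qpar_wrap:
  assumes "r \<ge> 2"
  shows "tpar k r powi - int k * qpar k r powi - int (r - 1) = tpar k r"
proof -
  have "tpar k r ^ k * qpar k r ^ (r - 1) = inverse (tpar k r)"
    using tpar_qpar_relation[OF assms, of k] tpar_eq_thalf_square thalf_nonzero
    by (simp add: field_simps)
  then show ?thesis
    by (simp add: power_int_minus flip: mult_inverse_of_nat_commute inverse_mult_distrib)
qed

lemma rank_chain:
  assumes "i < n" "rank_cnt n lam i + k < n"
  obtains c s where "inj_on c {..k}" "c 0 = i"
    "\<And>a. a \<le> k \<Longrightarrow> c a < n \<and> rank_cnt n lam (c a) = rank_cnt n lam i + a"
    "\<And>a. a < k \<Longrightarrow> upoint n k r lam (c (Suc a)) = upoint n k r lam (c a) * tpar k r * qpar k r ^ s a"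
    "\<And>a. a < k \<Longrightarrow> s a = 0 \<Longrightarrow> c a < c (Suc a)"
    "int (\<Sum>a<k. s a) = lam i - lam (c k)"
proof
  let ?rk = "rank_cnt n lam"
  define c where "c a = inv_into {..<n} ?rk (?rk i + a)" for a
  define s where "s a = nat (lam (c a) - lam (c (Suc a)))" for a
  show c: "c a < n \<and> ?rk (c a) = ?rk i + a" if "a \<le> k" for a
  proof -
    have "?rk i + a \<in> ?rk ` {..<n}"
      using bij_betw_rank_cnt[of n lam] that assms(2) by (simp add: bij_betw_def)
    then show ?thesis
      unfolding c_def by (metis inv_into_into lessThan_iff f_inv_into_f)
  qed
  show "inj_on c {..k}"
    by (rule inj_onI) (metis atMost_iff c add_left_cancel)
  show "c 0 = i"
    using c[of 0] assms(1) bij_betw_rank_cnt[of n lam] by (auto simp: bij_betw_def dest: inj_onD)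
  have prec: "precedes lam (c a) (c (Suc a))" if "a < k" for a
    using c[of a] c[of "Suc a"] that by (intro precedes_if_rank_cnt_Suc[of _ n]) auto
  have s: "int (s a) = lam (c a) - lam (c (Suc a))" if "a < k" for a
    using prec[OF that] by (auto simp: s_def precedes_def)
  show "upoint n k r lam (c (Suc a)) = upoint n k r lam (c a) * tpar k r * qpar k r ^ s a" if "a < k" for a
    using c[of a] c[of "Suc a"] that prec[OF that] unfolding s_def
    by (intro upoint_rank_Suc) (auto simp: precedes_def)
  show "c a < c (Suc a)" if "a < k" "s a = 0" for a
    using prec[OF that(1)] s[OF that(1)] that(2) by (auto simp: precedes_def)
  have "int (\<Sum>a<k. s a) = (\<Sum>a<k. lam (c a) - lam (c (Suc a)))"
    by (simp add: s)
  also have "\<dots> = lam (c 0) - lam (c k)"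
    by (rule sum_lessThan_telescope')
  finally show "int (\<Sum>a<k. s a) = lam i - lam (c k)"
    using \<open>c 0 = i\<close> by simp
qed

lemma bij_betw_rotate_mod: "bij_betw (\<lambda>b. (a + b) mod Suc k) {..k} {..k}"
proof -
  have cancel: "x = y" if xy: "x \<le> y" "y \<le> k" and eq: "(a + x) mod Suc k = (a + y) mod Suc k" for x y
  proof -
    obtain q where "a + y = a + x + Suc k * q"
      using eq[symmetric] xy by (auto elim: mod_eq_nat1E)
    then show "x = y"
      using xy by (cases q) auto
  qed
  have "inj_on (\<lambda>b. (a + b) mod Suc k) {..k}"
    by (rule inj_onI) (metis atMost_iff cancel nat_le_linear)
  moreover have "(\<lambda>b. (a + b) mod Suc k) ` {..k} \<subseteq> {..k}"
    by (auto simp: less_Suc_eq_le)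
  ultimately show ?thesis
    by (simp add: bij_betw_def endo_inj_surj)
qed

lemma wheel_of_closed_chain:
  assumes r: "r \<ge> 2" and inj: "inj_on c {..k}" and range: "\<And>a. a \<le> k \<Longrightarrow> c a < n"
    and step: "\<And>a. a < k \<Longrightarrow> z (c (Suc a)) = z (c a) * tpar k r * qpar k r ^ s a"
    and order: "\<And>a. a < k \<Longrightarrow> s a = 0 \<Longrightarrow> c a < c (Suc a)"
    and close: "z (c 0) = z (c k) * tpar k r" "c k < c 0"
    and total: "(\<Sum>a<k. s a) = r - 1"
  shows "\<exists>i s. wheel_cond n k r z i s"
proof -
  define \<sigma> where "\<sigma> a = (if a < k then s a else 0)" for a
  have cyc_step: "z (c (Suc a mod Suc k)) = z (c a) * tpar k r * qpar k r ^ \<sigma> a" if "a \<le> k" for a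
    using that step close(1) by (cases "a < k") (simp_all add: \<sigma>_def)
  have cyc_order: "c a < c (Suc a mod Suc k)" if "a \<le> k" "\<sigma> a = 0" for a
    using that order close(2) by (cases "a < k") (simp_all add: \<sigma>_def)
  have "(\<Sum>a<k. s a) \<noteq> 0"
    using total r by simp
  then obtain p where "p < k" "s p > 0"
    by (metis gr0I lessThan_iff sum.neutral)
  then have p: "p \<le> k" "\<sigma> p > 0"
    by (simp_all add: \<sigma>_def)
  \<comment> \<open>Start the wheel right after p, so that the omitted last step of the cycle has positive shift.\<close>
  define h where "h b = (Suc p + b) mod Suc k" for b
  have h: "bij_betw h {..k} {..k}"
    unfolding h_def by (rule bij_betw_rotate_mod)
  have h_le: "h b \<le> k" for b
    by (simp add: h_def less_Suc_eq_le)
  have h_Suc: "Suc (h b) mod Suc k = h (Suc b)" for b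
    by (simp add: h_def mod_Suc_eq)
  have "h k = p"
    unfolding h_def using mod_add_self2[of p "Suc k"] p(1) by simp
  have "r - 1 = (\<Sum>b\<le>k. \<sigma> (h b))"
    using total sum.reindex_bij_betw[OF h, of \<sigma>] by (simp add: \<sigma>_def flip: lessThan_Suc_atMost)
  also have "\<dots> = (\<Sum>b<k. \<sigma> (h b)) + \<sigma> p"
    using \<open>h k = p\<close> by (simp flip: lessThan_Suc_atMost)
  finally have "(\<Sum>b<k. \<sigma> (h b)) \<le> r - 2"
    using p(2) by linarith
  moreover have "inj_on (c \<circ> h) {..k}"
    using inj h by (simp add: bij_betw_def comp_inj_on)
  moreover have "z (c (h (Suc b))) = z (c (h b)) * tpar k r * qpar k r ^ \<sigma> (h b)" for b
    using cyc_step[OF h_le[of b]] by (simp add: h_Suc)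
  moreover have "\<sigma> (h b) = 0 \<Longrightarrow> c (h b) < c (h (Suc b))" for b
    using cyc_order[OF h_le[of b]] by (simp add: h_Suc)
  ultimately have "wheel_cond n k r z (c \<circ> h) (\<sigma> \<circ> h)"
    unfolding wheel_cond_def using range h_le by simp
  then show ?thesis
    by blast
qed

lemma wheel_of_nbhd:
  assumes r: "r \<ge> 2" and nb: "nbhd n (k + 1) (r - 1) lam i j"
  shows "\<exists>ii s. wheel_cond n k r (upoint n k r lam) ii s"
proof -
  let ?rk = "rank_cnt n lam" and ?z = "upoint n k r lam"
  have i: "i < n" and j: "j < n" and rk: "?rk j = ?rk i + k"
    and cs: "lam i - lam j \<le> int r - 2 \<or> (lam i - lam j = int r - 1 \<and> j < i)"
    using nb r by (auto simp: nbhd_def rho2_def)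
  have "?rk i + k < n"
    using rk rank_cnt_less[OF j, of lam] by simp
  then obtain c s where inj: "inj_on c {..k}" and c0: "c 0 = i"
    and c: "\<And>a. a \<le> k \<Longrightarrow> c a < n \<and> ?rk (c a) = ?rk i + a"
    and step: "\<And>a. a < k \<Longrightarrow> ?z (c (Suc a)) = ?z (c a) * tpar k r * qpar k r ^ s a"
    and order: "\<And>a. a < k \<Longrightarrow> s a = 0 \<Longrightarrow> c a < c (Suc a)"
    and total: "int (\<Sum>a<k. s a) = lam i - lam (c k)"
    using rank_chain[OF i] by blast
  have ck: "c k = j"
    by (rule inj_onD[OF bij_betw_imp_inj_on[OF bij_betw_rank_cnt[of n lam]]]) (use c[of k] j rk in simp_all)
  consider (short) "lam i - lam j \<le> int r - 2" | (wrap) "lam i - lam j = int r - 1" "j < i"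
    using cs by blast
  then show ?thesis
  proof cases
    case short
    then have "(\<Sum>a<k. s a) \<le> r - 2"
      using total[unfolded ck] r by linarith
    then have "wheel_cond n k r ?z c s"
      unfolding wheel_cond_def using inj c step order by simp
    then show ?thesis
      by blast
  next
    case wrap
    have "lam j - lam i = - int (r - 1)"
      using wrap(1) r by simp
    then have "?z i = ?z j * (tpar k r powi - int k * qpar k r powi - int (r - 1))"
      using upoint_ratio[OF j i, of k r lam] rk by (simp add: mult.assoc)
    then have close: "?z (c 0) = ?z (c k) * tpar k r"
      using tpar_qpar_wrap[OF r, of k] c0 ck by simp
    have range: "c a < n" if "a \<le> k" for a
      using c[OF that] by simp
    have "c k < c 0"
      using wrap(2) c0 ck by simp
    moreover have "(\<Sum>a<k. s a) = r - 1"
      using total[unfolded ck] wrap(1) r by linarith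
    ultimately show ?thesis
      using wheel_of_closed_chain[OF r inj range step order close] by blast
  qed
qed

lemma finite_wheels: "finite (wheels n k r lam)"
proof (rule finite_subset)
  show "wheels n k r lam \<subseteq> {c. \<forall>a. (a \<in> {..k} \<longrightarrow> c a \<in> {..<n}) \<and> (a \<notin> {..k} \<longrightarrow> c a = 0)}"
    by (auto simp: wheels_def wheel_cond_def)
qed (intro finite_set_of_finite_funs; simp)

lemma one_le_sharp_iff: "1 \<le> sharp n k r lam \<longleftrightarrow> wheels n k r lam \<noteq> {}"
  using finite_wheels[of n k r lam] by (auto simp: sharp_def Suc_le_eq card_gt_0_iff)

lemma wheels_nonempty_if_Sset:
  assumes "r \<ge> 2" "lam \<in> Sset n k r"
  shows "wheels n k r lam \<noteq> {}"
proof -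
  obtain i j where "nbhd n (k + 1) (r - 1) lam i j"
    using assms(2) by (auto simp: Sset_def)
  then have "\<exists>c s. wheel_cond n k r (upoint n k r lam) c s"
    by (rule wheel_of_nbhd[OF assms(1)])
  then obtain c s where W: "wheel_cond n k r (upoint n k r lam) c s"
    by blast
  \<comment> \<open>Elements of wheels are index tuples padded with 0 beyond k.\<close>
  have "wheel_cond n k r (upoint n k r lam) (\<lambda>a. if a \<le> k then c a else 0) s"
    using W by (auto simp: wheel_cond_def inj_on_def)
  then have "(\<lambda>a. if a \<le> k then c a else 0) \<in> wheels n k r lam"
    by (auto simp: wheels_def)
  then show ?thesis
    by blast
qed

lemma Iideal_subset_J1: "Iideal n k r \<subseteq> J1 n k r"
proof
  fix f
  assume f: "f \<in> Iideal n k r"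
  have "ueval n k r lam f = 0" if "1 \<le> sharp n k r lam" for lam
  proof -
    have "wheels n k r lam \<noteq> {}"
      using that one_le_sharp_iff[of n k r lam] by simp
    then obtain c where "c \<in> wheels n k r lam"
      by blast
    then obtain s where "wheel_cond n k r (upoint n k r lam) c s"
      by (auto simp: wheels_def)
    then have "upoint n k r lam \<in> Zset n k r"
      using upoint_nonzero by (auto simp: Zset_def upoint_def)
    then show ?thesis
      using f by (simp add: Iideal_def ueval_def)
  qed
  then show "f \<in> J1 n k r"
    using f by (simp add: Iideal_def J1_def)
qed

lemma J1_subset_J2:
  assumes "r \<ge> 2"
  shows "J1 n k r \<subseteq> J2 n k r"
proof
  fix f
  assume "f \<in> J1 n k r"
  moreover have "lam \<in> Pset n \<and> 1 \<le> sharp n k r lam" if "lam \<in> Sset n k r" for lam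
    using that wheels_nonempty_if_Sset[OF assms that] one_le_sharp_iff[of n k r lam] by (simp add: Sset_def)
  ultimately show "f \<in> J2 n k r"
    by (simp add: J1_def J2_def)
qed

lemma J2_subset_J3: "J2 n k r \<subseteq> J3 n k r"
  by (auto simp: J2_def J3_def Sset_def S'set_def)

locale wheel_shape =
  fixes n k r :: nat and i s :: "nat \<Rightarrow> nat"
  assumes inj: "inj_on i {..k}" and range: "\<And>a. a \<le> k \<Longrightarrow> i a < n"
    and shift_sum: "(\<Sum>a<k. s a) \<le> r - 2"
    and shift_order: "\<And>a. a < k \<Longrightarrow> s a = 0 \<Longrightarrow> i a < i (Suc a)"
begin

definition spokes :: "nat set" where
  "spokes = i ` {..k}"

definition slot :: "nat \<Rightarrow> nat" where
  "slot = the_inv_into {..k} i"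

definition offset :: "nat \<Rightarrow> nat" where
  "offset a = (\<Sum>b<a. s b)"

lemma offset_0 [simp]: "offset 0 = 0"
  by (simp add: offset_def)

definition wheel_point :: "(nat \<Rightarrow> K) \<Rightarrow> nat \<Rightarrow> K" where
  "wheel_point y j = (if j \<in> spokes then y (i 0) * (tpar k r ^ slot j * qpar k r ^ offset (slot j)) else y j)"

definition others :: "nat list" where
  "others = sorted_list_of_set ({..<n} - spokes)"

lemma spokes_subset: "spokes \<subseteq> {..<n}"
  using range by (auto simp: spokes_def)

lemma slot_apply: "a \<le> k \<Longrightarrow> slot (i a) = a"
  using the_inv_into_f_f[OF inj] by (simp add: slot_def)

lemma slot_spoke: "j \<in> spokes \<Longrightarrow> slot j \<le> k \<and> i (slot j) = j"
  using the_inv_into_into[OF inj] f_the_inv_into_f[OF inj] by (auto simp: slot_def spokes_def)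

lemma set_others: "set others = {..<n} - spokes" and distinct_others: "distinct others"
  by (simp_all add: others_def)

lemma wheel_point_eq:
  assumes "wheel_cond n k r z i s" "j < n"
  shows "wheel_point z j = z j"
proof -
  have "z (i a) = z (i 0) * (tpar k r ^ a * qpar k r ^ offset a)" if "a \<le> k" for a
    using that
  proof (induction a)
    case (Suc a)
    then show ?case
      using assms(1) by (simp add: wheel_cond_def offset_def power_add mult_ac)
  qed (simp add: offset_def)
  then show ?thesis
    by (metis slot_spoke wheel_point_def)
qed


definition free_list :: "nat list" where
  "free_list = others @ [i 0]"

definition order_list :: "nat list" where
  "order_list = others @ map i [0..<Suc k]"

definition pos :: "nat \<Rightarrow> nat" where
  "pos = the_inv_into {..<n} ((!) order_list)"

text \<open>For an exponent vector \<mu> strictly decreasing along free_list, weight \<mu> is an element of S'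
  whose point u_\<lambda> is the torus point with coordinates stair_coeff v * q^(-\<mu> v): the coordinates off
  the wheel get \<mu>, and the wheel hangs below \<mu> (i 0) by the partial sums of the shifts.\<close>

definition weight :: "(nat \<Rightarrow> nat) \<Rightarrow> nat \<Rightarrow> int" where
  "weight \<mu> j = (if j \<in> spokes then int (\<mu> (i 0)) - int (offset (slot j)) else if j < n then int (\<mu> j) else 0)"

definition stair_coeff :: "nat \<Rightarrow> K" where
  "stair_coeff v = thalf k r powi (1 + 2 * int (pos v) - int n)"

lemma set_free_list: "set free_list = insert (i 0) ({..<n} - spokes)"
  by (simp add: free_list_def set_others)

lemma distinct_free_list: "distinct free_list"
  by (simp add: free_list_def distinct_others set_others spokes_def)

lemma set_spoke_list: "set (map i [0..<Suc k]) = spokes"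
  unfolding spokes_def set_map set_upt atLeast0LessThan lessThan_Suc_atMost ..

lemma distinct_order_list: "distinct order_list"
proof -
  have "distinct (map i [0..<Suc k])"
    using inj by (simp add: distinct_map atLeast0LessThan lessThan_Suc_atMost del: upt_Suc)
  then show ?thesis
    using set_spoke_list by (auto simp: order_list_def distinct_others set_others)
qed

lemma set_order_list: "set order_list = {..<n}"
  using spokes_subset set_spoke_list by (auto simp: order_list_def set_others simp del: upt_Suc)

lemma length_order_list: "length order_list = n"
  using distinct_card[OF distinct_order_list] by (simp add: set_order_list)

lemma order_list_nth_pos: "j < n \<Longrightarrow> pos j < n \<and> order_list ! pos j = j"
proof -
  have nth: "bij_betw ((!) order_list) {..<n} {..<n}"
    using bij_betw_nth[OF distinct_order_list] by (simp add: length_order_list set_order_list)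
  then have "bij_betw pos {..<n} {..<n}"
    unfolding pos_def by (rule bij_betw_the_inv_into)
  then show "j < n \<Longrightarrow> ?thesis"
    using f_the_inv_into_f_bij_betw[OF nth] by (auto simp: pos_def dest: bij_betwE)
qed

lemma pos_spoke:
  assumes "a \<le> k"
  shows "pos (i a) = length others + a"
proof -
  have at: "order_list ! (length others + a) = i a"
    using assms by (simp add: order_list_def nth_append del: upt_Suc)
  have lt: "length others + a < n"
    using assms length_order_list by (simp add: order_list_def)
  have "inj_on ((!) order_list) {..<n}"
    using distinct_order_list length_order_list by (simp add: inj_on_nth)
  then show ?thesis
    by (rule inj_onD) (use order_list_nth_pos[OF range[OF assms]] at lt in simp_all)
qed

lemma weight_free: "v \<in> set free_list \<Longrightarrow> weight \<mu> v = int (\<mu> v)"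
  using slot_apply[of 0] by (auto simp: weight_def set_free_list spokes_def offset_def)

lemma weight_spoke: "a \<le> k \<Longrightarrow> weight \<mu> (i a) = int (\<mu> (i 0)) - int (offset a)"
  by (simp add: weight_def spokes_def slot_apply)

lemma sorted_order_list:
  assumes stair: "sorted_wrt (\<lambda>u v. \<mu> v < \<mu> u) free_list"
  shows "sorted_wrt (precedes (weight \<mu>)) order_list"
proof -
  have others: "sorted_wrt (\<lambda>u v. \<mu> v < \<mu> u) others" and above: "\<And>x. x \<in> set others \<Longrightarrow> \<mu> (i 0) < \<mu> x"
    using stair by (auto simp: free_list_def sorted_wrt_append)
  have weight_others: "weight \<mu> x = int (\<mu> x)" if "x \<in> set others" for x
    using that weight_free by (simp add: free_list_def)
  have "sorted_wrt (precedes (weight \<mu>)) others"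
    using others by (rule sorted_wrt_mono_rel[rotated]) (simp add: weight_others precedes_def)
  moreover have "precedes (weight \<mu>) (i a) (i (Suc a))" if "a < k" for a
    using that shift_order[of a] by (auto simp: weight_spoke offset_def precedes_def)
  then have "sorted_wrt (precedes (weight \<mu>)) (map i [0..<Suc k])"
    by (simp add: sorted_wrt_iff_nth_Suc_transp[OF transp_precedes] nth_append del: upt_Suc)
  moreover have "precedes (weight \<mu>) x y" if "x \<in> set others" "y \<in> spokes" for x y
    using that above[of x] by (auto simp: spokes_def weight_spoke weight_others precedes_def)
  ultimately show ?thesis
    using set_spoke_list by (auto simp: order_list_def sorted_wrt_append simp del: upt_Suc)
qed

lemma rank_cnt_weight:
  assumes "sorted_wrt (\<lambda>u v. \<mu> v < \<mu> u) free_list" "j < n"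
  shows "rank_cnt n (weight \<mu>) j = pos j"
  using rank_cnt_nth[OF distinct_order_list set_order_list sorted_order_list[OF assms(1)], of "pos j"]
    order_list_nth_pos[OF assms(2)] by simp

lemma weight_in_S'set:
  assumes "r \<ge> 2" "sorted_wrt (\<lambda>u v. \<mu> v < \<mu> u) free_list"
  shows "weight \<mu> \<in> S'set n k r"
proof -
  have "offset k \<le> r - 2"
    using shift_sum by (simp add: offset_def)
  then have "int (offset k) \<le> int r - 2"
    using assms(1) by linarith
  then have "nbhd n (k + 1) (r - 1) (weight \<mu>) (i 0) (i k) \<and> weight \<mu> (i 0) - weight \<mu> (i k) \<le> int r - 2"
    using assms range[of 0] range[of k]
    by (simp add: nbhd_def rho2_def rank_cnt_weight pos_spoke weight_spoke)
  moreover have "weight \<mu> \<in> Pset n"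
    using spokes_subset by (auto simp: Pset_def weight_def)
  ultimately show ?thesis
    by (auto simp: S'set_def)
qed

lemma upoint_weight:
  assumes stair: "sorted_wrt (\<lambda>u v. \<mu> v < \<mu> u) free_list" and "j < n"
  shows "upoint n k r (weight \<mu>) j = wheel_point (\<lambda>v. stair_coeff v * inverse (qpar k r) ^ \<mu> v) j"
proof -
  have free: "upoint n k r (weight \<mu>) v = stair_coeff v * inverse (qpar k r) ^ \<mu> v"
    if "v \<in> set free_list" for v
  proof -
    have "v < n"
      using that range[of 0] by (auto simp: set_free_list)
    then have "- rho2 n (weight \<mu>) v = 1 + 2 * int (pos v) - int n"
      by (simp add: rho2_def rank_cnt_weight[OF stair])
    then show ?thesis
      using that \<open>v < n\<close> by (simp add: upoint_def weight_free stair_coeff_def power_int_minus power_inverse)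
  qed
  have spoke: "upoint n k r (weight \<mu>) (i a) = upoint n k r (weight \<mu>) (i 0) * (tpar k r ^ a * qpar k r ^ offset a)"
    if "a \<le> k" for a
    using upoint_ratio[OF range[of 0] range[OF that], of k r "weight \<mu>"] that
    by (simp add: rank_cnt_weight[OF stair] range pos_spoke weight_spoke mult.assoc)
  show ?thesis
  proof (cases "j \<in> spokes")
    case True
    then have "slot j \<le> k" "i (slot j) = j"
      using slot_spoke by auto
    then show ?thesis
      using spoke[of "slot j"] free[of "i 0"] True by (simp add: wheel_point_def set_free_list)
  next
    case False
    then show ?thesis
      using free[of j] \<open>j < n\<close> by (simp add: wheel_point_def set_free_list)
  qed
qed

lemma leval_wheel_point_eq_0:
  assumes "r \<ge> 2" "finite {m. f m \<noteq> 0}"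
    and zero: "\<And>\<mu>. sorted_wrt (\<lambda>u v. \<mu> v < \<mu> u) free_list \<Longrightarrow> leval n f (upoint n k r (weight \<mu>)) = 0"
    and nonzero: "\<And>v. v \<in> set free_list \<Longrightarrow> y v \<noteq> 0"
  shows "leval n f (wheel_point y) = 0"
proof -
  let ?c = "\<lambda>m. f m * (\<Prod>j\<in>spokes. (tpar k r ^ slot j * qpar k r ^ offset (slot j)) powi (m ! j))"
  let ?E = "\<lambda>m u. if u = i 0 then \<Sum>j\<in>spokes. m ! j else m ! u"
  have collapse: "leval n f (wheel_point y') = laurent_sum {m. f m \<noteq> 0} ?c ?E (set free_list) y'"
    if "y' (i 0) \<noteq> 0" for y'
    unfolding leval_eq_laurent_sum wheel_point_def set_free_list
    using laurent_sum_collapse[where V = "{..<n}" and B = spokes and v = "i 0" and y = y', OF _ spokes_subset _ that]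
    by (simp add: spokes_def)
  have "laurent_sum {m. f m \<noteq> 0} ?c ?E (set free_list) y = 0"
  proof (rule laurent_sum_zero_if_zero_on_staircase[where C = stair_coeff and Q = "inverse (qpar k r)"])
    fix \<mu> :: "nat \<Rightarrow> nat"
    assume stair: "sorted_wrt (\<lambda>u v. \<mu> v < \<mu> u) free_list"
    have "leval n f (wheel_point (\<lambda>v. stair_coeff v * inverse (qpar k r) ^ \<mu> v)) =
        leval n f (upoint n k r (weight \<mu>))"
      unfolding leval_eq_laurent_sum by (intro laurent_sum_cong) (simp add: upoint_weight[OF stair])
    then show "laurent_sum {m. f m \<noteq> 0} ?c ?E (set free_list) (\<lambda>v. stair_coeff v * inverse (qpar k r) ^ \<mu> v) = 0"
      using collapse zero[OF stair] by (simp add: stair_coeff_def thalf_nonzero qpar_nonzero)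
  qed (use assms distinct_free_list qpar_powi_eq_1_iff in
      \<open>auto simp: stair_coeff_def thalf_nonzero qpar_nonzero power_int_inverse\<close>)
  then show ?thesis
    using collapse nonzero[of "i 0"] by (simp add: free_list_def)
qed

end

lemma wheel_shape_if_wheel_cond: "wheel_cond n k r z i s \<Longrightarrow> wheel_shape n k r i s"
  by unfold_locales (auto simp: wheel_cond_def)

lemma J3_subset_Iideal:
  assumes "r \<ge> 2"
  shows "J3 n k r \<subseteq> Iideal n k r"
proof
  fix f
  assume f: "f \<in> J3 n k r"
  have "leval n f z = 0" if z: "z \<in> Zset n k r" for z
  proof -
    obtain i s where W: "wheel_cond n k r z i s"
      using z by (auto simp: Zset_def)
    interpret wheel_shape n k r i s
      using W by (rule wheel_shape_if_wheel_cond)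
    have "leval n f z = leval n f (wheel_point z)"
      unfolding leval_eq_laurent_sum by (intro laurent_sum_cong) (simp add: wheel_point_eq[OF W])
    also have "\<dots> = 0"
    proof (rule leval_wheel_point_eq_0[OF assms])
      show "finite {m. f m \<noteq> 0}"
        using f by (simp add: J3_def laurent_def)
      show "leval n f (upoint n k r (weight \<mu>)) = 0" if "sorted_wrt (\<lambda>u v. \<mu> v < \<mu> u) free_list" for \<mu>
        using f weight_in_S'set[OF assms that] by (simp add: J3_def ueval_def)
      show "z v \<noteq> 0" if "v \<in> set free_list" for v
        using z that range[of 0] by (auto simp: Zset_def set_free_list)
    qed
    finally show ?thesis .
  qed
  then show "f \<in> Iideal n k r"
    using f by (simp add: Iideal_def J3_def)
qed

theorem lemma3p1:
  fixes n k r :: nat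
  assumes "n \<ge> 2" and "1 \<le> k" and "k \<le> n - 1" and "r \<ge> 2"
  shows "Iideal n k r = J1 n k r \<and> Iideal n k r = J2 n k r \<and> Iideal n k r = J3 n k r"
  using Iideal_subset_J1 J1_subset_J2[OF assms(4)] J2_subset_J3 J3_subset_Iideal[OF assms(4)]
  by (metis subset_antisym subset_trans)

end
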